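(* Let $\eta_{0},\eta_{1},\eta_{2}>0$ and $\beta(s)=\eta_{0}\exp(-\eta_{1}s^{\eta_{2}})$ for $s>0$, and fix $a>0$. Let $K(u)=u\beta(1/u)$ for $u>0$, $K(0)=0$, $K^{*}(v)=\sup_{u\ge0}\{uv-K(u)\}$, and $F_{a}(x)=\int_{x}^{a}\frac{\mathrm{d}v}{K^{*}(v)}$ for $x\in(0,a]$, with inverse $F_{a}^{-1}$. Then there exist $C>0$ and $0<v_{0}<1\wedge a$ such that for all $v\in(0,v_{0}]$, \[ K^{*}(v)\ge Cv\Big(\log\frac{1}{v}\Big)^{-1/\eta_{2}}, \] and there exists $C'>0$ such that for all $n\in\mathbb{N}$, \[ F_{a}^{-1}(n)\le C'\exp\Big(-\Big(C\frac{1+\eta_{2}}{\eta_{2}}n\Big)^{\eta_{2}/(1+\eta_{2})}\Big). \] *)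

theory Defs
  imports "HOL-Analysis.Analysis"
begin

definition beta_fn :: "real \<Rightarrow> real \<Rightarrow> real \<Rightarrow> real \<Rightarrow> real" where
  "beta_fn \<eta>0 \<eta>1 \<eta>2 s = \<eta>0 * exp (- \<eta>1 * s powr \<eta>2)"

definition K_fn :: "real \<Rightarrow> real \<Rightarrow> real \<Rightarrow> real \<Rightarrow> real" where
  "K_fn \<eta>0 \<eta>1 \<eta>2 u = (if u > 0 then u * beta_fn \<eta>0 \<eta>1 \<eta>2 (1 / u) else 0)"

definition Kstar :: "real \<Rightarrow> real \<Rightarrow> real \<Rightarrow> real \<Rightarrow> ereal" where
  "Kstar \<eta>0 \<eta>1 \<eta>2 v = (SUP u\<in>{0..}. ereal (u * v - K_fn \<eta>0 \<eta>1 \<eta>2 u))"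

text \<open>1/K*(v), with the convention 1/(+infinity) = 0\<close>
definition invKstar :: "real \<Rightarrow> real \<Rightarrow> real \<Rightarrow> real \<Rightarrow> real" where
  "invKstar \<eta>0 \<eta>1 \<eta>2 v = real_of_ereal (1 / Kstar \<eta>0 \<eta>1 \<eta>2 v)"

definition F_fn :: "real \<Rightarrow> real \<Rightarrow> real \<Rightarrow> real \<Rightarrow> real \<Rightarrow> real" where
  "F_fn \<eta>0 \<eta>1 \<eta>2 a x = integral {x..a} (invKstar \<eta>0 \<eta>1 \<eta>2)"

definition Finv :: "real \<Rightarrow> real \<Rightarrow> real \<Rightarrow> real \<Rightarrow> real \<Rightarrow> real" where
  "Finv \<eta>0 \<eta>1 \<eta>2 a = the_inv_into {0<..a} (F_fn \<eta>0 \<eta>1 \<eta>2 a)"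

end

theory Submission
  imports Defs
begin

text \<open>For small \<open>v\<close> the choice \<open>u = (2 ln(1/v) / \<eta>1) powr (-1/\<eta>2)\<close> makes \<open>\<beta>(1/u) = \<eta>0 v\<^sup>2\<close>,
  so \<open>u v - K(u) \<ge> u v / 2\<close>; this is the lower bound on \<open>K\<^sup>*\<close>. Integrating the resulting
  upper bound on \<open>1/K\<^sup>*\<close> gives \<open>F\<^sub>a(x) \<le> F\<^sub>a(w) + ln(1/x) powr q / (C q)\<close> with \<open>q = (1 + \<eta>2)/\<eta>2\<close>
  below a fixed \<open>w\<close>, and solving for \<open>x\<close>, with the subadditivity of \<open>t \<mapsto> t powr (1/q)\<close>, gives
  the decay of \<open>F\<^sub>a\<^sup>-\<^sup>1\<close>. Conversely \<open>K\<^sup>*(v) = O(v)\<close> near \<open>0\<close>, so \<open>F\<^sub>a\<close> is unbounded and every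
  \<open>n > 0\<close> has exactly one preimage.\<close>

lemma powr_add_le_add_powr:
  fixes x y p :: real
  assumes "0 \<le> x" "0 \<le> y" "0 < p" "p \<le> 1"
  shows "(x + y) powr p \<le> x powr p + y powr p"
proof (cases "x + y = 0")
  case True
  then show ?thesis using assms by simp
next
  case False
  then have s: "x + y > 0" using assms by simp
  have le_powr: "t \<le> t powr p" if "0 \<le> t" "t \<le> 1" for t :: real
  proof (cases "t = 0")
    case False
    then have "t powr 1 \<le> t powr p" using that assms by (intro powr_mono') auto
    then show ?thesis using that False by simp
  qed simp
  have "(x + y) powr p * (x/(x+y) + y/(x+y))
          \<le> (x + y) powr p * ((x/(x+y)) powr p + (y/(x+y)) powr p)"
    using s assms by (intro mult_left_mono add_mono le_powr) auto
  also have "\<dots> = x powr p + y powr p"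
    using s assms by (simp add: powr_divide distrib_left)
  finally show ?thesis using s by (simp add: add_divide_distrib[symmetric])
qed

lemma has_real_derivative_powr_ln_inverse:
  fixes q v :: real
  assumes "0 < v" "v < 1"
  shows "((\<lambda>v. ln (1/v) powr q) has_real_derivative - q * ln (1/v) powr (q - 1) / v) (at v)"
  using assms by (auto intro!: derivative_eq_intros simp: field_simps)

lemma one_divide_ereal: "r \<noteq> 0 \<Longrightarrow> 1 / ereal r = ereal (1 / r)"
  by (simp add: divide_ereal_def one_ereal_def inverse_eq_divide)

lemma real_of_ereal_inverse_nonneg:
  fixes x :: ereal
  assumes "0 \<le> x"
  shows "0 \<le> real_of_ereal (1 / x)"
  using assms by (cases x) (auto simp: one_divide_ereal divide_ereal_def)

lemma real_of_ereal_inverse_antimono: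
  fixes x y :: ereal
  assumes "0 < x" "x \<le> y"
  shows "real_of_ereal (1 / y) \<le> real_of_ereal (1 / x)"
  using assms by (cases x; cases y) (auto simp: one_divide_ereal frac_le)

locale stretched_exp =
  fixes \<eta>0 \<eta>1 \<eta>2 :: real
  assumes \<eta>0_pos: "0 < \<eta>0" and \<eta>1_pos: "0 < \<eta>1" and \<eta>2_pos: "0 < \<eta>2"
begin

abbreviation "K \<equiv> K_fn \<eta>0 \<eta>1 \<eta>2"
abbreviation "Ks \<equiv> Kstar \<eta>0 \<eta>1 \<eta>2"
abbreviation "iKs \<equiv> invKstar \<eta>0 \<eta>1 \<eta>2"

lemma K_nonneg: "0 \<le> K u"
  using \<eta>0_pos by (simp add: K_fn_def beta_fn_def)

lemma K_eq: "0 < u \<Longrightarrow> K u = u * \<eta>0 * exp (- \<eta>1 * (1/u) powr \<eta>2)"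
  by (simp add: K_fn_def beta_fn_def)

lemma Kstar_ge: "0 \<le> u \<Longrightarrow> ereal (u * v - K u) \<le> Ks v"
  unfolding Kstar_def by (rule SUP_upper) simp

lemma Kstar_nonneg: "0 \<le> Ks v"
  using Kstar_ge[of 0 v] by (simp add: K_fn_def zero_ereal_def)

lemma Kstar_mono: "v \<le> w \<Longrightarrow> Ks v \<le> Ks w"
  unfolding Kstar_def by (rule SUP_mono) (force intro: mult_left_mono)

definition C0 :: real where "C0 = (\<eta>1/2) powr (1/\<eta>2) / 2"

lemma C0_pos: "0 < C0"
  using \<eta>1_pos by (simp add: C0_def)

lemma Kstar_lower:
  assumes "0 < v" "v < 1" "\<eta>0 * v \<le> 1/2"
  shows "ereal (C0 * v * (ln (1 / v)) powr (- 1 / \<eta>2)) \<le> Ks v"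
proof -
  define L where "L = ln (1/v)"
  have L: "0 < L" using assms by (simp add: L_def)
  define u where "u = (2*L/\<eta>1) powr (-1/\<eta>2)"
  have u: "0 < u" using L \<eta>1_pos by (simp add: u_def)
  have "(1/u) powr \<eta>2 = 2*L/\<eta>1"
    using L \<eta>1_pos \<eta>2_pos by (simp add: u_def powr_minus_divide powr_powr)
  then have "exp (- \<eta>1 * (1/u) powr \<eta>2) = exp (ln v + ln v)"
    using \<eta>1_pos assms by (simp add: L_def ln_div)
  also have "\<dots> = v\<^sup>2"
    by (simp only: exp_add exp_ln[OF assms(1)] power2_eq_square)
  finally have "u * v - K u = u * (v - \<eta>0 * v * v)"
    using u by (simp add: K_eq algebra_simps power2_eq_square)
  also have "\<dots> \<ge> u * (v/2)"
    using u assms mult_right_mono[OF assms(3), of v] by (intro mult_left_mono) auto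
  finally have "u * v / 2 \<le> u * v - K u" by simp
  moreover have "u = 2 * C0 * L powr (-1/\<eta>2)"
    using L \<eta>1_pos
    by (simp add: u_def C0_def powr_mult powr_minus_divide powr_divide powr_minus field_simps)
  ultimately have "ereal (C0 * v * L powr (-1/\<eta>2)) \<le> ereal (u * v - K u)" by simp
  also have "\<dots> \<le> Ks v" using u by (intro Kstar_ge) simp
  finally show ?thesis unfolding L_def .
qed

lemma Kstar_pos:
  assumes "0 < v"
  shows "0 < Ks v"
proof -
  define w where "w = min v (min (1/2) (1/(2*\<eta>0)))"
  have w: "0 < w" "w < 1" "w \<le> v" "w \<le> 1/(2*\<eta>0)"
    using assms \<eta>0_pos by (auto simp: w_def)
  then have "\<eta>0 * w \<le> 1/2"
    using mult_left_mono[OF w(4), of \<eta>0] \<eta>0_pos by simp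
  have "0 < C0 * w * (ln (1 / w)) powr (- 1 / \<eta>2)"
    using w C0_pos by simp
  also have "ereal \<dots> \<le> Ks w" using Kstar_lower w \<open>\<eta>0 * w \<le> 1/2\<close> by blast
  also have "\<dots> \<le> Ks v" using Kstar_mono w by blast
  finally show ?thesis by (simp add: zero_ereal_def)
qed

text \<open>For \<open>u > \<eta>1 powr (1/\<eta>2)\<close> one has \<open>\<beta>(1/u) > \<eta>0/e \<ge> v\<close>, so \<open>u v - K(u) < 0\<close>.\<close>
lemma Kstar_le_linear:
  assumes "0 < v" "v \<le> \<eta>0 / exp 1"
  shows "Ks v \<le> ereal (\<eta>1 powr (1/\<eta>2) * v)"
  unfolding Kstar_def
proof (rule SUP_least)
  define U where "U = \<eta>1 powr (1/\<eta>2)"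
  have U: "0 < U" using \<eta>1_pos by (simp add: U_def)
  fix u :: real
  assume "u \<in> {0..}"
  show "ereal (u * v - K u) \<le> ereal (U * v)"
  proof (cases "u \<le> U")
    case True
    then have "u * v \<le> U * v" using assms by (intro mult_right_mono) auto
    then show ?thesis using K_nonneg[of u] by simp
  next
    case False
    then have u: "0 < u" using U by simp
    have "(1/u) powr \<eta>2 < (1/U) powr \<eta>2"
      using False U u \<eta>2_pos by (intro powr_less_mono2) (auto simp: frac_less2)
    also have "(1/U) powr \<eta>2 = 1/\<eta>1"
      using \<eta>1_pos \<eta>2_pos by (simp add: U_def powr_divide powr_powr)
    finally have "\<eta>1 * (1/u) powr \<eta>2 < 1"
      using \<eta>1_pos by (simp add: field_simps)
    have "v \<le> \<eta>0 * exp (-1)"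
      using assms by (simp add: exp_minus field_simps)
    also have "\<dots> < \<eta>0 * exp (- \<eta>1 * (1/u) powr \<eta>2)"
      using \<eta>0_pos \<open>\<eta>1 * (1/u) powr \<eta>2 < 1\<close> by simp
    finally have "v < \<eta>0 * exp (- \<eta>1 * (1/u) powr \<eta>2)" .
    then have "u * v - K u < 0"
      using u by (simp add: K_eq algebra_simps)
    moreover have "0 < U * v" using U assms by simp
    ultimately show ?thesis by simp
  qed
qed

lemma invKstar_nonneg: "0 \<le> iKs v"
  unfolding invKstar_def by (rule real_of_ereal_inverse_nonneg[OF Kstar_nonneg])

lemma invKstar_antimono: "0 < v \<Longrightarrow> v \<le> w \<Longrightarrow> iKs w \<le> iKs v"
  unfolding invKstar_def by (intro real_of_ereal_inverse_antimono Kstar_pos Kstar_mono)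

lemma invKstar_le: "0 < B \<Longrightarrow> ereal B \<le> Ks v \<Longrightarrow> iKs v \<le> 1 / B"
  using real_of_ereal_inverse_antimono[of "ereal B" "Ks v"]
  by (simp add: invKstar_def one_divide_ereal)

lemma invKstar_ge:
  assumes "0 < v" "Ks v \<le> ereal B"
  shows "1 / B \<le> iKs v"
proof -
  have "0 < ereal B" using Kstar_pos[OF assms(1)] assms(2) by order
  then show ?thesis
    using real_of_ereal_inverse_antimono[OF Kstar_pos[OF assms(1)] assms(2)]
    by (simp add: invKstar_def one_divide_ereal)
qed

lemma invKstar_integrable:
  assumes "0 < x"
  shows "iKs integrable_on {x..y}"
proof -
  have "mono_on {x..y} (\<lambda>v. - iKs v)"
    using assms by (intro mono_onI) (simp add: invKstar_antimono)
  then have "(\<lambda>v. - (- iKs v)) integrable_on {x..y}"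
    by (intro integrable_neg integrable_on_mono_on)
  then show ?thesis by simp
qed

end

locale stretched_exp_horizon = stretched_exp +
  fixes a :: real
  assumes a_pos: "0 < a"
begin

abbreviation "F \<equiv> F_fn \<eta>0 \<eta>1 \<eta>2 a"

lemma F_split: "0 < x \<Longrightarrow> x \<le> y \<Longrightarrow> y \<le> a \<Longrightarrow> F x = integral {x..y} iKs + F y"
  unfolding F_fn_def by (simp add: Henstock_Kurzweil_Integration.integral_combine invKstar_integrable)

lemma integral_invKstar_nonneg: "0 < x \<Longrightarrow> 0 \<le> integral {x..y} iKs"
  by (intro integral_nonneg invKstar_integrable invKstar_nonneg)

lemma F_nonneg: "0 < x \<Longrightarrow> 0 \<le> F x"
  unfolding F_fn_def by (rule integral_invKstar_nonneg)

lemma F_antimono: "0 < x \<Longrightarrow> x \<le> y \<Longrightarrow> y \<le> a \<Longrightarrow> F y \<le> F x"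
  using F_split integral_invKstar_nonneg by fastforce

lemma F_strict_antimono:
  assumes "0 < x" "x < y" "y \<le> a" "0 < F y"
  shows "F y < F x"
proof -
  have "0 < iKs y"
  proof (rule ccontr)
    assume "\<not> 0 < iKs y"
    then have "iKs v = 0" if "v \<in> {y..a}" for v
    proof -
      have "iKs v \<le> iKs y" using that assms by (intro invKstar_antimono) auto
      then show ?thesis using \<open>\<not> 0 < iKs y\<close> invKstar_nonneg[of v] by linarith
    qed
    then have "F y = integral {y..a} (\<lambda>v. 0)"
      unfolding F_fn_def by (rule integral_cong)
    then show False using assms by simp
  qed
  have "0 < integral {x..y} (\<lambda>v. iKs y)" using assms \<open>0 < iKs y\<close> by simp
  also have "\<dots> \<le> integral {x..y} iKs"
    using assms by (intro integral_le invKstar_integrable invKstar_antimono integrable_const_ivl) auto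
  finally show ?thesis using F_split[of x y] assms by simp
qed

lemma F_unbounded: "\<exists>x\<in>{0<..a}. t \<le> F x"
proof -
  define U where "U = \<eta>1 powr (1/\<eta>2)"
  have U: "0 < U" using \<eta>1_pos by (simp add: U_def)
  define v1 where "v1 = min (\<eta>0 / exp 1) a"
  have v1: "0 < v1" "v1 \<le> a" "v1 \<le> \<eta>0 / exp 1" using \<eta>0_pos a_pos by (auto simp: v1_def)
  define t' where "t' = max t 0"
  define x where "x = v1 * exp (- U * t')"
  have x: "0 < x" "x \<le> v1" using v1 U by (auto simp: x_def t'_def mult_le_cancel_left1)
  have "((\<lambda>v. ln v / U) has_vector_derivative (1 / (U * v))) (at v within {x..v1})"
    if "v \<in> {x..v1}" for v
    using that x U
    by (auto intro!: derivative_eq_intros simp: has_real_derivative_iff_has_vector_derivative[symmetric])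
  then have "((\<lambda>v. 1 / (U * v)) has_integral (ln v1 / U - ln x / U)) {x..v1}"
    by (rule fundamental_theorem_of_calculus[OF x(2)])
  moreover have "ln v1 / U - ln x / U = t'"
    using v1 U by (simp add: x_def ln_mult diff_divide_distrib[symmetric])
  ultimately have "t' \<le> integral {x..v1} iKs"
    using invKstar_ge[OF _ Kstar_le_linear] x v1
    by (intro has_integral_le[OF _ integrable_integral[OF invKstar_integrable]])
      (auto simp: U_def)
  also have "\<dots> \<le> F x" using F_split[OF x(1) x(2) v1(2)] F_nonneg[of v1] v1 by simp
  finally show ?thesis using x v1 unfolding t'_def by force
qed

lemma F_surj: "0 \<le> t \<Longrightarrow> \<exists>x\<in>{0<..a}. F x = t"
proof -
  assume "0 \<le> t"
  obtain x0 where x0: "x0 \<in> {0<..a}" "t \<le> F x0" using F_unbounded by blast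
  have "continuous_on {x0..a} F"
    unfolding F_fn_def using x0 by (intro indefinite_integral_continuous_1' invKstar_integrable) simp
  moreover have "F a \<le> t" using \<open>0 \<le> t\<close> by (simp add: F_fn_def)
  ultimately obtain x where "x0 \<le> x" "x \<le> a" "F x = t"
    using IVT2'[of F a t x0] x0 by auto
  then show ?thesis using x0 by force
qed

lemma Finv_eq:
  assumes "x \<in> {0<..a}" "F x = t" "0 < t"
  shows "Finv \<eta>0 \<eta>1 \<eta>2 a t = x"
  unfolding Finv_def the_inv_into_def
proof (rule the_equality)
  fix y
  assume "y \<in> {0<..a} \<and> F y = t"
  then show "y = x"
    using F_strict_antimono[of x y] F_strict_antimono[of y x] assms
    by (metis greaterThanAtMost_iff less_irrefl linorder_neqE_linordered_idom)
qed (use assms in simp)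

definition v0 :: real where "v0 = min (1/2) (min (a/2) (1/(2*\<eta>0)))"

lemma v0_bounds: "0 < v0" "v0 < min 1 a" "\<eta>0 * v0 \<le> 1/2"
proof -
  show "0 < v0" "v0 < min 1 a" using \<eta>0_pos a_pos by (auto simp: v0_def)
  have "v0 \<le> 1/(2*\<eta>0)" by (simp add: v0_def)
  then show "\<eta>0 * v0 \<le> 1/2" using mult_left_mono[of v0 "1/(2*\<eta>0)" \<eta>0] \<eta>0_pos by simp
qed

lemma Kstar_lower_near_zero:
  "\<exists>w. 0 < w \<and> w < min 1 a \<and>
     (\<forall>v\<in>{0<..w}. Ks v \<ge> ereal (C0 * v * (ln (1 / v)) powr (- 1 / \<eta>2)))"
proof (intro exI[of _ v0] conjI ballI)
  fix v
  assume "v \<in> {0<..v0}"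
  moreover have "\<eta>0 * v \<le> \<eta>0 * v0" using calculation \<eta>0_pos by (intro mult_left_mono) auto
  ultimately show "Ks v \<ge> ereal (C0 * v * (ln (1 / v)) powr (- 1 / \<eta>2))"
    using v0_bounds by (intro Kstar_lower) auto
qed (use v0_bounds in auto)

text \<open>\<open>-ln(1/v) powr q / (C0 q)\<close> is an antiderivative of the upper bound for \<open>1/K\<^sup>*\<close>
  given by \<open>Kstar_lower\<close>.\<close>
lemma F_le_ln_powr:
  assumes "0 < x" "x < w" "w \<le> a" "w < 1" "\<eta>0 * w \<le> 1/2"
  shows "F x \<le> F w + ln (1/x) powr ((1 + \<eta>2) / \<eta>2) / (C0 * (1 + \<eta>2) / \<eta>2)"
proof -
  define q where "q = (1 + \<eta>2) / \<eta>2"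
  have q: "0 < q" "q - 1 = 1 / \<eta>2" using \<eta>2_pos by (auto simp: q_def field_simps)
  define G where "G v = - (ln (1/v) powr q) / (C0 * q)" for v
  define g where "g v = ln (1/v) powr (1/\<eta>2) / (C0 * v)" for v
  have "(G has_vector_derivative g v) (at v within {x..w})" if "v \<in> {x..w}" for v
  proof -
    have "(G has_real_derivative g v) (at v)"
      unfolding G_def
      using DERIV_cdivide[OF DERIV_minus[OF has_real_derivative_powr_ln_inverse], of v q "C0 * q"]
        that assms q C0_pos
      by (auto intro: DERIV_cong simp: g_def)
    then have "(G has_real_derivative g v) (at v within {x..w})" by (rule DERIV_subset) simp
    then show ?thesis by (simp add: has_real_derivative_iff_has_vector_derivative[symmetric])
  qed
  then have "(g has_integral (G w - G x)) {x..w}"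
    using assms by (intro fundamental_theorem_of_calculus) auto
  moreover have "iKs v \<le> g v" if "v \<in> {x..w}" for v
  proof -
    have "\<eta>0 * v \<le> \<eta>0 * w" using that \<eta>0_pos by (intro mult_left_mono) auto
    then have v: "0 < v" "v < 1" "\<eta>0 * v \<le> 1/2" using that assms by auto
    have "1 / (C0 * v * ln (1/v) powr (- 1 / \<eta>2)) = g v"
      using v by (simp add: g_def powr_minus_divide)
    then show ?thesis
      using invKstar_le[OF _ Kstar_lower[OF v]] v C0_pos by simp
  qed
  ultimately have "integral {x..w} iKs \<le> G w - G x"
    by (intro has_integral_le[OF integrable_integral[OF invKstar_integrable]]) (use assms in auto)
  moreover have "G w \<le> 0" using C0_pos q by (simp add: G_def)
  ultimately show ?thesis
    using F_split[of x w] assms by (simp add: G_def q_def)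
qed

lemma F_decay:
  "\<exists>C' > 0. \<forall>x\<in>{0<..a}.
     x \<le> C' * exp (- ((C0 * (1 + \<eta>2) / \<eta>2 * F x) powr (\<eta>2 / (1 + \<eta>2))))"
proof -
  define c where "c = C0 * (1 + \<eta>2) / \<eta>2"
  define p where "p = \<eta>2 / (1 + \<eta>2)"
  define B where "B = (c * F v0) powr p"
  have c: "0 < c" using C0_pos \<eta>2_pos by (simp add: c_def)
  have p: "0 < p" "p \<le> 1" "((1 + \<eta>2) / \<eta>2) * p = 1" using \<eta>2_pos by (auto simp: p_def)
  have Fv0: "0 \<le> F v0" using v0_bounds by (intro F_nonneg) simp
  have "x \<le> max a 1 * exp B * exp (- ((c * F x) powr p))" if x: "x \<in> {0<..a}" for x
  proof (cases "x < v0")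
    case False
    then have "(c * F x) powr p \<le> B"
      unfolding B_def using x c p v0_bounds F_antimono[of v0 x] F_nonneg[of x]
      by (intro powr_mono2 mult_left_mono) auto
    then have "1 \<le> exp B * exp (- ((c * F x) powr p))" by (simp flip: exp_add)
    then have "max a 1 * 1 \<le> max a 1 * (exp B * exp (- ((c * F x) powr p)))"
      by (intro mult_left_mono) auto
    then show ?thesis using x by (simp add: mult.assoc)
  next
    case True
    define L where "L = ln (1/x)"
    have L: "0 < L" "exp (- L) = x" using True x v0_bounds by (auto simp: L_def ln_div)
    have "F v0 \<le> F x" using True x v0_bounds by (intro F_antimono) auto
    have "F x - F v0 \<le> L powr ((1 + \<eta>2) / \<eta>2) / c"
      using F_le_ln_powr[of x v0] True x v0_bounds by (simp add: c_def L_def)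
    then have "c * (F x - F v0) \<le> L powr ((1 + \<eta>2) / \<eta>2)"
      using c by (simp add: pos_le_divide_eq mult.commute)
    then have "(c * (F x - F v0)) powr p \<le> (L powr ((1 + \<eta>2) / \<eta>2)) powr p"
      using c p \<open>F v0 \<le> F x\<close> by (intro powr_mono2) auto
    also have "\<dots> = L" using L by (simp only: powr_powr p(3)) simp
    finally have "(c * (F x - F v0)) powr p \<le> L" .
    moreover have "(c * F x) powr p \<le> (c * (F x - F v0)) powr p + B"
      using powr_add_le_add_powr[of "c * (F x - F v0)" "c * F v0" p] c p Fv0 \<open>F v0 \<le> F x\<close>
      by (simp add: B_def algebra_simps)
    ultimately have "exp (- L) \<le> exp B * exp (- ((c * F x) powr p))" by (simp flip: exp_add)
    also have "\<dots> \<le> max a 1 * (exp B * exp (- ((c * F x) powr p)))"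
      using mult_right_mono[of 1 "max a 1" "exp B * exp (- ((c * F x) powr p))"] by simp
    finally show ?thesis using L by (simp add: mult.assoc)
  qed
  then show ?thesis unfolding c_def p_def by (intro exI[of _ "max a 1 * exp B"]) auto
qed

end

theorem lemma15:
  fixes \<eta>0 \<eta>1 \<eta>2 a :: real
  assumes "\<eta>0 > 0" and "\<eta>1 > 0" and "\<eta>2 > 0" and "a > 0"
  shows "\<exists>C > 0.
           (\<exists>v0. 0 < v0 \<and> v0 < min 1 a \<and>
              (\<forall>v\<in>{0<..v0}. Kstar \<eta>0 \<eta>1 \<eta>2 v \<ge> ereal (C * v * (ln (1 / v)) powr (- 1 / \<eta>2)))) \<and>
           (\<exists>C' > 0. \<forall>n::nat.
              Finv \<eta>0 \<eta>1 \<eta>2 a (real n)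
                \<le> C' * exp (- ((C * (1 + \<eta>2) / \<eta>2 * real n) powr (\<eta>2 / (1 + \<eta>2)))))"
proof -
  interpret stretched_exp_horizon \<eta>0 \<eta>1 \<eta>2 a
    using assms by unfold_locales auto
  obtain C' where C': "0 < C'"
    and decay: "\<And>x. x \<in> {0<..a} \<Longrightarrow>
      x \<le> C' * exp (- ((C0 * (1 + \<eta>2) / \<eta>2 * F x) powr (\<eta>2 / (1 + \<eta>2))))"
    using F_decay by blast
  define C'' where "C'' = C' + \<bar>Finv \<eta>0 \<eta>1 \<eta>2 a 0\<bar>"
  have "Finv \<eta>0 \<eta>1 \<eta>2 a (real n)
          \<le> C'' * exp (- ((C0 * (1 + \<eta>2) / \<eta>2 * real n) powr (\<eta>2 / (1 + \<eta>2))))" for n :: nat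
  proof (cases "n = 0")
    case True
    \<comment> \<open>\<open>F\<close> vanishes wherever \<open>K\<^sup>* = \<infinity>\<close> (e.g. on \<open>(\<eta>0, a]\<close>), so \<open>Finv \<dots> 0\<close> is an
      unspecified value and has to be absorbed into the constant.\<close>
    then show ?thesis using C' by (simp add: C''_def)
  next
    case False
    obtain x where x: "x \<in> {0<..a}" "F x = real n" using F_surj[of "real n"] by auto
    then have "Finv \<eta>0 \<eta>1 \<eta>2 a (real n) = x" using False by (intro Finv_eq) auto
    then show ?thesis
      using decay[OF x(1)] x(2) by (simp add: C''_def distrib_right order_trans)
  qed
  moreover have "0 < C''" using C' by (simp add: C''_def)
  ultimately show ?thesis using C0_pos Kstar_lower_near_zero by blast
qed

end
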